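(* Let $U\colon[0,1]^2\to[0,1]$ be a uninorm with neutral element $e\in(0,1)$, $U\in\mathcal U$. If for some $x_1<x_2$ in $[0,1]$ both functions $u_{x_1}$ and $u_{x_2}$ are non-continuous at the same point $y\in[0,1]$, then $y$ is an idempotent element of $U$.
   Context: A uninorm is a commutative, associative binary operation on $[0,1]$, non-decreasing in each variable, with a neutral element $e$. Underlying t-norm $T_U(x,y)=U(ex,ey)/e$, underlying t-conorm $C_U(x,y)=(U(e+(1-e)x,e+(1-e)y)-e)/(1-e)$; $\mathcal U$ is the class of uninorms for which both are continuous. For $x\in[0,1]$, $u_x\colon[0,1]\to[0,1]$ is $u_x(z)=U(x,z)$. An idempotent element is $x$ with $U(x,x)=x$. *)

theory Defs
  imports "HOL-Analysis.Analysis"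
begin

definition uninorm :: "(real \<Rightarrow> real \<Rightarrow> real) \<Rightarrow> real \<Rightarrow> bool" where
  "uninorm U e \<longleftrightarrow>
     e \<in> {0..1} \<and>
     (\<forall>x\<in>{0..1}. \<forall>y\<in>{0..1}. U x y \<in> {0..1}) \<and>
     (\<forall>x\<in>{0..1}. \<forall>y\<in>{0..1}. U x y = U y x) \<and>
     (\<forall>x\<in>{0..1}. \<forall>y\<in>{0..1}. \<forall>z\<in>{0..1}. U (U x y) z = U x (U y z)) \<and>
     (\<forall>x\<in>{0..1}. \<forall>y\<in>{0..1}. \<forall>z\<in>{0..1}. y \<le> z \<longrightarrow> U x y \<le> U x z) \<and>
     (\<forall>x\<in>{0..1}. U e x = x)"

definition underlying_tnorm :: "(real \<Rightarrow> real \<Rightarrow> real) \<Rightarrow> real \<Rightarrow> real \<Rightarrow> real \<Rightarrow> real" where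
  "underlying_tnorm U e x y = U (e * x) (e * y) / e"

definition underlying_tconorm :: "(real \<Rightarrow> real \<Rightarrow> real) \<Rightarrow> real \<Rightarrow> real \<Rightarrow> real \<Rightarrow> real" where
  "underlying_tconorm U e x y = (U (e + (1 - e) * x) (e + (1 - e) * y) - e) / (1 - e)"

definition in_class_U :: "(real \<Rightarrow> real \<Rightarrow> real) \<Rightarrow> real \<Rightarrow> bool" where
  "in_class_U U e \<longleftrightarrow>
     continuous_on ({0..1} \<times> {0..1}) (\<lambda>p. underlying_tnorm U e (fst p) (snd p)) \<and>
     continuous_on ({0..1} \<times> {0..1}) (\<lambda>p. underlying_tconorm U e (fst p) (snd p))"

definition idempotent_elem :: "(real \<Rightarrow> real \<Rightarrow> real) \<Rightarrow> real \<Rightarrow> bool" where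
  "idempotent_elem U x \<longleftrightarrow> U x x = x"

end

theory Submission
  imports Defs
begin

text \<open>Each section \<open>U x\<close> is monotone, and a monotone function mapping an interval onto an
  interval is continuous there. For \<open>y < e\<close>, continuity of the underlying t-norm and
  t-conorm makes \<open>U x\<close> map suitable intervals onto intervals, so a discontinuity of \<open>U x1\<close>
  at \<open>y\<close> forces \<open>U x1 > e\<close> just right of \<open>y\<close>, and one of \<open>U x2\<close> forces \<open>U x2 < e\<close>
  just left of \<open>y\<close>. If \<open>y\<close> were not idempotent, the least \<open>b\<close> with \<open>U y b = y\<close> lies
  above \<open>y\<close> and is idempotent. Then \<open>l\<close>, the supremum of \<open>U x1\<close> on \<open>(y, b)\<close>, satisfies
  \<open>e < l \<le> x1\<close> and \<open>U s l = l\<close> for the \<open>s \<ge> e\<close> with \<open>U x1 s = x2\<close>; writing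
  \<open>x1 = U l r\<close> gives \<open>x2 = U (U l s) r = U l r = x1\<close>. The case \<open>y > e\<close> follows from the
  dual uninorm \<open>1 - U (1 - a) (1 - b)\<close>, which exchanges the t-norm and t-conorm parts.\<close>

lemma mono_onto_interval_right_bound:
  fixes f :: "real \<Rightarrow> real"
  assumes mono: "mono_on {a..b} f" and onto: "{f a..f b} \<subseteq> f ` {a..b}"
    and y: "y \<in> {a..b}" and \<epsilon>: "\<epsilon> > 0"
  obtains r where "y < r" "\<And>x. x \<in> {a..b} \<Longrightarrow> x < r \<Longrightarrow> f x < f y + \<epsilon>"
proof (cases "f b < f y + \<epsilon>")
  case True
  have "f x < f y + \<epsilon>" if "x \<in> {a..b}" for x
    using mono_onD[OF mono, of x b] that True by auto
  then show ?thesis using y by (intro that[of "b + 1"]) auto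
next
  case False
  have "f a \<le> f y" using mono_onD[OF mono, of a y] y by auto
  then have "f y + \<epsilon> / 2 \<in> f ` {a..b}" using onto False \<epsilon> by (intro subsetD[OF onto]) auto
  then obtain t where t: "t \<in> {a..b}" "f t = f y + \<epsilon> / 2" by auto
  have "y < t" by (rule ccontr) (use mono_onD[OF mono, of t y] t y \<epsilon> in auto)
  moreover have "f x < f y + \<epsilon>" if "x \<in> {a..b}" "x < t" for x
    using mono_onD[OF mono, of x t] that t \<epsilon> by auto
  ultimately show ?thesis by (rule that)
qed

lemma mono_onto_interval_left_bound:
  fixes f :: "real \<Rightarrow> real"
  assumes mono: "mono_on {a..b} f" and onto: "{f a..f b} \<subseteq> f ` {a..b}"
    and y: "y \<in> {a..b}" and \<epsilon>: "\<epsilon> > 0"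
  obtains l where "l < y" "\<And>x. x \<in> {a..b} \<Longrightarrow> l < x \<Longrightarrow> f y - \<epsilon> < f x"
proof (cases "f y - \<epsilon> < f a")
  case True
  have "f y - \<epsilon> < f x" if "x \<in> {a..b}" for x
    using mono_onD[OF mono, of a x] that True by auto
  then show ?thesis using y by (intro that[of "a - 1"]) auto
next
  case False
  have "f y \<le> f b" using mono_onD[OF mono, of y b] y by auto
  then have "f y - \<epsilon> / 2 \<in> f ` {a..b}" using onto False \<epsilon> by (intro subsetD[OF onto]) auto
  then obtain t where t: "t \<in> {a..b}" "f t = f y - \<epsilon> / 2" by auto
  have "t < y" by (rule ccontr) (use mono_onD[OF mono, of y t] t y \<epsilon> in auto)
  moreover have "f y - \<epsilon> < f x" if "x \<in> {a..b}" "t < x" for x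
    using mono_onD[OF mono, of t x] that t \<epsilon> by auto
  ultimately show ?thesis by (rule that)
qed

lemma continuous_on_mono_onto_interval:
  fixes f :: "real \<Rightarrow> real"
  assumes mono: "mono_on {a..b} f" and onto: "{f a..f b} \<subseteq> f ` {a..b}"
  shows "continuous_on {a..b} f"
  unfolding continuous_on_iff
proof (intro ballI allI impI)
  fix y \<epsilon> :: real assume y: "y \<in> {a..b}" and \<epsilon>: "\<epsilon> > 0"
  obtain r where r: "y < r" "\<And>x. x \<in> {a..b} \<Longrightarrow> x < r \<Longrightarrow> f x < f y + \<epsilon>"
    using mono_onto_interval_right_bound[OF mono onto y \<epsilon>] by blast
  obtain l where l: "l < y" "\<And>x. x \<in> {a..b} \<Longrightarrow> l < x \<Longrightarrow> f y - \<epsilon> < f x"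
    using mono_onto_interval_left_bound[OF mono onto y \<epsilon>] by blast
  show "\<exists>\<delta>>0. \<forall>x\<in>{a..b}. dist x y < \<delta> \<longrightarrow> dist (f x) (f y) < \<epsilon>"
  proof (intro exI[of _ "min (r - y) (y - l)"] conjI ballI impI)
    fix x assume "x \<in> {a..b}" "dist x y < min (r - y) (y - l)"
    with r(2)[of x] l(2)[of x] show "dist (f x) (f y) < \<epsilon>" by (auto simp: dist_real_def abs_less_iff)
  qed (use r l in auto)
qed

lemma continuous_within_mono_onto_interval:
  fixes f :: "real \<Rightarrow> real"
  assumes mono: "mono_on {a..b} f" and onto: "{f a..f b} \<subseteq> f ` {a..b}"
    and ab: "0 \<le> a" "b \<le> 1" and y: "a \<le> y" "y < b" "a = 0 \<or> a < y"
  shows "continuous (at y within {0..1}) f"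
proof -
  define c where "c = (if a = 0 then -1 else a)"
  have "at y within {0..1} = at y within {a..b}"
    by (rule at_within_nhd[of _ "{c<..<b}"]) (use ab y in \<open>auto simp: c_def split: if_splits\<close>)
  moreover have "continuous (at y within {a..b}) f"
    using continuous_on_mono_onto_interval[OF mono onto] y by (simp add: continuous_on_eq_continuous_within)
  ultimately show ?thesis by simp
qed

lemma continuous_within_reflect:
  fixes f :: "real \<Rightarrow> real"
  assumes "continuous (at (1 - y) within {0..1}) (\<lambda>z. 1 - f (1 - z))"
  shows "continuous (at y within {0..1}) f"
proof -
  have "continuous (at (1 - y) within {0..1}) (\<lambda>z. f (1 - z))"
    using continuous_diff[OF continuous_const[of _ 1] assms] by simp
  moreover have "(\<lambda>z::real. 1 - z) ` {0..1} = {0..1}"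
    by (auto simp: image_iff intro: bexI[of _ "1 - _"])
  ultimately have "continuous (at y within {0..1}) ((\<lambda>z. f (1 - z)) \<circ> (\<lambda>z. 1 - z))"
    by (intro continuous_within_compose) (auto intro: continuous_intros)
  then show ?thesis by (simp add: o_def)
qed

lemma continuous_on_Icc_exists_near_right_end:
  fixes f :: "real \<Rightarrow> real"
  assumes cont: "continuous_on {a..b} f" and "a < b" and "c < f b"
  obtains t where "a < t" "t < b" "c < f t"
proof -
  have "(f \<longlongrightarrow> f b) (at_left b)"
    using cont \<open>a < b\<close> by (auto simp: continuous_on_def at_within_Icc_at_left[symmetric])
  then have "eventually (\<lambda>t. c < f t \<and> t \<in> {a<..<b}) (at_left b)"
    using \<open>c < f b\<close> \<open>a < b\<close> by (intro eventually_conj order_tendstoD(1) eventually_at_left_real)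
  then show ?thesis using that eventually_happens'[OF trivial_limit_at_left_real] by auto
qed

lemma continuous_on_Icc_exists_near_left_end:
  fixes f :: "real \<Rightarrow> real"
  assumes cont: "continuous_on {a..b} f" and "a < b" and "f a < c"
  obtains t where "a < t" "t < b" "f t < c"
proof -
  have "(f \<longlongrightarrow> f a) (at_right a)"
    using cont \<open>a < b\<close> by (auto simp: continuous_on_def at_within_Icc_at_right[symmetric])
  then have "eventually (\<lambda>t. f t < c \<and> t \<in> {a<..<b}) (at_right a)"
    using \<open>f a < c\<close> \<open>a < b\<close> by (intro eventually_conj order_tendstoD(2) eventually_at_right_real)
  then show ?thesis using that eventually_happens'[OF trivial_limit_at_right_real] by auto
qed

text \<open>Weaker than membership in \<open>\<U>\<close>: only the sections over \<open>[0,e]\<^sup>2\<close> and \<open>[e,1]\<^sup>2\<close>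
  need to be continuous, a condition visibly preserved under duality.\<close>

locale sectionally_continuous_uninorm =
  fixes U :: "real \<Rightarrow> real \<Rightarrow> real" and e :: real
  assumes uninorm: "uninorm U e" and e_pos: "0 < e" and e_less_1: "e < 1"
    and continuous_lower: "\<And>a. a \<in> {0..e} \<Longrightarrow> continuous_on {0..e} (U a)"
    and continuous_upper: "\<And>a. a \<in> {e..1} \<Longrightarrow> continuous_on {e..1} (U a)"
begin

lemma U_range: "0 \<le> a \<Longrightarrow> a \<le> 1 \<Longrightarrow> 0 \<le> b \<Longrightarrow> b \<le> 1 \<Longrightarrow> 0 \<le> U a b \<and> U a b \<le> 1"
  using uninorm unfolding uninorm_def by auto

lemma U_commute: "0 \<le> a \<Longrightarrow> a \<le> 1 \<Longrightarrow> 0 \<le> b \<Longrightarrow> b \<le> 1 \<Longrightarrow> U a b = U b a"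
  using uninorm unfolding uninorm_def by auto

lemma U_assoc:
  "0 \<le> a \<Longrightarrow> a \<le> 1 \<Longrightarrow> 0 \<le> b \<Longrightarrow> b \<le> 1 \<Longrightarrow> 0 \<le> c \<Longrightarrow> c \<le> 1
   \<Longrightarrow> U (U a b) c = U a (U b c)"
  using uninorm unfolding uninorm_def by auto

lemma U_mono_right: "0 \<le> a \<Longrightarrow> a \<le> 1 \<Longrightarrow> 0 \<le> b \<Longrightarrow> b \<le> c \<Longrightarrow> c \<le> 1 \<Longrightarrow> U a b \<le> U a c"
  using uninorm unfolding uninorm_def by auto

lemma U_mono_left: "0 \<le> a \<Longrightarrow> a \<le> b \<Longrightarrow> b \<le> 1 \<Longrightarrow> 0 \<le> c \<Longrightarrow> c \<le> 1 \<Longrightarrow> U a c \<le> U b c"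
  using U_mono_right[of c a b] U_commute[of a c] U_commute[of b c] by auto

lemma U_neutral_left: "0 \<le> a \<Longrightarrow> a \<le> 1 \<Longrightarrow> U e a = a"
  using uninorm unfolding uninorm_def by auto

lemma U_neutral_right: "0 \<le> a \<Longrightarrow> a \<le> 1 \<Longrightarrow> U a e = a"
  using U_neutral_left U_commute[of a e] e_pos e_less_1 by auto

lemma U_le_left: "0 \<le> a \<Longrightarrow> a \<le> 1 \<Longrightarrow> 0 \<le> b \<Longrightarrow> b \<le> e \<Longrightarrow> U a b \<le> a"
  using U_mono_right[of a b e] U_neutral_right[of a] e_less_1 by auto

lemma U_ge_left: "0 \<le> a \<Longrightarrow> a \<le> 1 \<Longrightarrow> e \<le> b \<Longrightarrow> b \<le> 1 \<Longrightarrow> a \<le> U a b"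
  using U_mono_right[of a e b] U_neutral_right[of a] e_pos by auto

lemma U_zero: "0 \<le> a \<Longrightarrow> a \<le> e \<Longrightarrow> U a 0 = 0"
  using U_le_left[of 0 a] U_commute[of a 0] U_range[of a 0] e_less_1 by auto

lemma U_one: "e \<le> a \<Longrightarrow> a \<le> 1 \<Longrightarrow> U a 1 = 1"
  using U_ge_left[of 1 a] U_commute[of a 1] U_range[of a 1] e_pos by auto

lemma section_onto_lower: "0 \<le> a \<Longrightarrow> a \<le> e \<Longrightarrow> {0..a} \<subseteq> U a ` {0..e}"
  using IVT'[of "U a" 0 _ e] U_zero[of a] U_neutral_right[of a] continuous_lower[of a] e_pos e_less_1
  by (fastforce simp: image_iff)

lemma section_onto_upper: "e \<le> a \<Longrightarrow> a \<le> 1 \<Longrightarrow> {a..1} \<subseteq> U a ` {e..1}"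
  using IVT'[of "U a" e _ 1] U_one[of a] U_neutral_right[of a] continuous_upper[of a] e_pos e_less_1
  by (fastforce simp: image_iff)

lemma mono_on_section: "0 \<le> x \<Longrightarrow> x \<le> 1 \<Longrightarrow> {a..b} \<subseteq> {0..1} \<Longrightarrow> mono_on {a..b} (U x)"
  by (rule mono_onI) (auto intro: U_mono_right)

lemma continuous_section_if_le_e:
  assumes x: "0 \<le> x" "x \<le> 1" and yz: "0 \<le> y" "y < z" "z \<le> e" and "U x z \<le> e"
  shows "continuous (at y within {0..1}) (U x)"
proof (rule continuous_within_mono_onto_interval[of 0 z])
  define v where "v = U x z"
  have v: "0 \<le> v" "v \<le> e" using U_range[of x z] x yz e_less_1 \<open>U x z \<le> e\<close> by (auto simp: v_def)
  show "{U x 0..U x z} \<subseteq> U x ` {0..z}"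
  proof
    fix p assume p: "p \<in> {U x 0..U x z}"
    then have "p \<in> U v ` {0..e}"
      using U_range[of x 0] x e_less_1 by (intro subsetD[OF section_onto_lower[OF v]]) (auto simp: v_def)
    then obtain w where w: "0 \<le> w" "w \<le> e" "p = U v w" by auto
    have "U z w \<in> {0..z}" using U_range[of z w] U_le_left[of z w] w yz e_less_1 by auto
    moreover have "U x (U z w) = p" using U_assoc[of x z w] x yz w e_less_1 by (simp add: v_def)
    ultimately show "p \<in> U x ` {0..z}" by force
  qed
qed (use x yz e_less_1 in \<open>auto intro: mono_on_section\<close>)

lemma continuous_section_if_ge_e:
  assumes x: "0 \<le> x" "x \<le> 1" and ty: "0 \<le> t" "t < y" "y < e" and "e \<le> U x t"
  shows "continuous (at y within {0..1}) (U x)"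
proof (rule continuous_within_mono_onto_interval[of t e])
  define v where "v = U x t"
  have v: "e \<le> v" "v \<le> 1" using U_range[of x t] x ty e_less_1 \<open>e \<le> U x t\<close> by (auto simp: v_def)
  show "{U x t..U x e} \<subseteq> U x ` {t..e}"
  proof
    fix p assume p: "p \<in> {U x t..U x e}"
    then have "p \<le> x" using U_neutral_right[of x] x by auto
    then obtain r where r: "e \<le> r" "r \<le> 1" "p = U v r"
      using section_onto_upper[OF v] p x by (force simp: v_def)
    define q where "q = U t r"
    have q: "t \<le> q" "q \<le> 1" using U_range[of t r] U_ge_left[of t r] r ty e_less_1 by (auto simp: q_def)
    have "U x q = p" using U_assoc[of x t r] x ty r e_less_1 by (simp add: v_def q_def)
    moreover have "U x e \<le> U x q" if "e < q"
      using U_mono_right[of x e q] that q x e_pos by auto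
    ultimately have "U x (min q e) = p" using p by (auto simp: min_def)
    moreover have "min q e \<in> {t..e}" using q ty by auto
    ultimately show "p \<in> U x ` {t..e}" by force
  qed
qed (use x ty e_less_1 in \<open>auto intro: mono_on_section\<close>)

lemma idempotent_neutral_below:
  assumes b: "0 \<le> b" "b \<le> e" "U b b = b" and w: "0 \<le> w" "w \<le> b"
  shows "U b w = w"
proof -
  obtain q where q: "0 \<le> q" "q \<le> e" "w = U b q" using section_onto_lower[of b] b w by force
  have "U b w = U (U b b) q" using U_assoc[of b b q] q b e_less_1 by simp
  then show ?thesis using b q by simp
qed

lemma least_section_solution:
  assumes y: "0 \<le> y" "y < e" "U y y < y"
  obtains b where "y < b" "b \<le> e" "U b b = b" "\<And>t. 0 \<le> t \<Longrightarrow> t < b \<Longrightarrow> U y t < y"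
proof -
  define S where "S = {t \<in> {0..e}. U y t = y}"
  have "closed S" unfolding S_def
    by (rule continuous_closed_preimage_constant[OF continuous_lower]) (use y in auto)
  moreover have "e \<in> S" using U_neutral_right[of y] y e_pos e_less_1 by (auto simp: S_def)
  moreover have bdd: "bdd_below S" by (rule bdd_belowI[of _ 0]) (auto simp: S_def)
  ultimately have "Inf S \<in> S" using closed_contains_Inf by blast
  define b where "b = Inf S"
  have b: "0 \<le> b" "b \<le> e" "U y b = y" using \<open>Inf S \<in> S\<close> by (auto simp: S_def b_def)
  have below: "U y t < y" if t: "0 \<le> t" "t < b" for t
  proof -
    have "t \<notin> S" using cInf_lower[OF _ bdd, of t] t by (auto simp: b_def)
    then show ?thesis using U_le_left[of y t] t b y e_less_1 by (auto simp: S_def)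
  qed
  have "y < b"
    using U_mono_right[of y b y] b y e_less_1 by (cases "y < b") auto
  moreover have "U b b = b"
  proof -
    have bb: "0 \<le> U b b" "U b b \<le> b" using U_range[of b b] U_le_left[of b b] b e_less_1 by auto
    have "U y (U b b) = y" using U_assoc[of y b b] b y e_less_1 by simp
    then have "U b b \<in> S" using bb b by (auto simp: S_def)
    then show ?thesis using cInf_lower[OF _ bdd] bb by (force simp: b_def)
  qed
  ultimately show ?thesis using that b below by blast
qed

lemma section_gt_e_right_of_discontinuity:
  assumes "0 \<le> x" "x \<le> 1" "0 \<le> y" "\<not> continuous (at y within {0..1}) (U x)" "y < t" "t \<le> e"
  shows "e < U x t"
  using continuous_section_if_le_e[of x y t] assms by force

lemma section_lt_e_left_of_discontinuity:
  assumes "0 \<le> x" "x \<le> 1" "y < e" "\<not> continuous (at y within {0..1}) (U x)" "0 \<le> t" "t < y"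
  shows "U x t < e"
  using continuous_section_if_ge_e[of x t y] assms by force

context
  fixes x1 x2 y b l :: real
  assumes x12: "0 \<le> x1" "x1 < x2" "x2 \<le> 1" and y: "0 \<le> y" "y < b"
    and b: "b \<le> e" "U b b = b" and below_b: "\<And>t. y < t \<Longrightarrow> t < b \<Longrightarrow> U y t < y"
    and discont1: "\<not> continuous (at y within {0..1}) (U x1)"
    and discont2: "\<not> continuous (at y within {0..1}) (U x2)"
    and l_def: "l = Sup (U x1 ` {y<..<b})"
begin

lemma section_x1_le_x1: "y < t \<Longrightarrow> t < b \<Longrightarrow> U x1 t \<le> x1"
  using U_le_left[of x1 t] x12 y b by auto

lemma section_x1_le_l: "y < t \<Longrightarrow> t < b \<Longrightarrow> U x1 t \<le> l"
  unfolding l_def by (rule cSup_upper) (auto intro!: bdd_aboveI2 section_x1_le_x1)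

lemma l_bounds: "e < l" "l \<le> x1"
proof -
  have m: "y < (y + b) / 2" "(y + b) / 2 < b" using y by auto
  then have "e < U x1 ((y + b) / 2)"
    using section_gt_e_right_of_discontinuity[OF _ _ _ discont1] x12 y b by auto
  also have "\<dots> \<le> l" using section_x1_le_l[OF m] .
  finally show "e < l" .
  show "l \<le> x1" unfolding l_def using y by (intro cSup_least) (auto intro: section_x1_le_x1)
qed

lemma e_less_U_l: assumes w: "y < w" "w \<le> e" shows "e < U l w"
proof -
  define w' where "w' = min w b"
  have w': "y < w'" "w' \<le> b" "w' \<le> w" using w y by (auto simp: w'_def)
  have "U w' b = w'"
    using U_commute[of w' b] idempotent_neutral_below[of b w'] w' y b e_less_1 by auto
  moreover have "continuous_on {y..b} (U w')"
    by (rule continuous_on_subset[OF continuous_lower]) (use w' w y b in auto)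
  ultimately obtain t where t: "y < t" "t < b" "y < U w' t"
    using continuous_on_Icc_exists_near_right_end[of y b "U w'" y] y w' by auto
  have "U w' t \<le> e" using U_le_left[of w' t] t w' w y b e_less_1 by auto
  then have "e < U x1 (U w' t)"
    using section_gt_e_right_of_discontinuity[OF _ _ _ discont1] U_range[of w' t] t x12 y b by auto
  also have "U x1 (U w' t) = U (U x1 t) w'"
    using U_assoc[of x1 t w'] U_commute[of t w'] t w' x12 y b e_less_1 by auto
  also have "\<dots> \<le> U l w'"
    using U_mono_left[of "U x1 t" l w'] U_range[of x1 t] section_x1_le_l l_bounds t w' x12 y b
    by auto
  also have "\<dots> \<le> U l w"
    using U_mono_right[of l w' w] l_bounds w' w y x12 by auto
  finally show ?thesis .
qed

lemma U_x2_less_l: assumes t: "y < t" "t < b" shows "U x2 t < l"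
proof (rule ccontr)
  assume "\<not> U x2 t < l"
  have "U t y < y" using below_b[OF t] U_commute[of t y] t y b e_less_1 by auto
  moreover have "continuous_on {y..e} (U t)"
    by (rule continuous_on_subset[OF continuous_lower]) (use t y b in auto)
  ultimately obtain w where w: "y < w" "w < e" "U t w < y"
    using continuous_on_Icc_exists_near_left_end[of y e "U t" y] y b by auto
  have "U l w \<le> U (U x2 t) w"
    using U_mono_left[of l "U x2 t" w] \<open>\<not> U x2 t < l\<close> l_bounds U_range[of x2 t] x12 t w y b
    by auto
  also have "\<dots> = U x2 (U t w)" using U_assoc[of x2 t w] x12 t w y b e_less_1 by auto
  also have "\<dots> < e"
    using section_lt_e_left_of_discontinuity[OF _ _ _ discont2] U_range[of t w] x12 t w y b e_less_1
    by auto
  finally show False using e_less_U_l[of w] w by auto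
qed

lemma U_fixes_l: assumes s: "e \<le> s" "s \<le> 1" "U x1 s = x2" shows "U s l = l"
proof (rule antisym)
  show "l \<le> U s l" using U_ge_left[of l s] U_commute[of l s] s l_bounds x12 e_pos by auto
  show "U s l \<le> l"
  proof (rule ccontr)
    assume "\<not> U s l \<le> l"
    moreover have "continuous_on {e..l} (U s)"
      by (rule continuous_on_subset[OF continuous_upper]) (use s l_bounds x12 in auto)
    ultimately obtain v where v: "e < v" "v < l" "l < U s v"
      using continuous_on_Icc_exists_near_right_end[of e l "U s" l] l_bounds by auto
    have "U x1 ` {y<..<b} \<noteq> {}" using y by auto
    then obtain t where t: "y < t" "t < b" "v < U x1 t"
      using less_cSup_iff[of "U x1 ` {y<..<b}" v] v l_def
        bdd_aboveI2[of "{y<..<b}" "U x1" x1] section_x1_le_x1 by auto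
    have "U s v \<le> U s (U x1 t)"
      using U_mono_right[of s v "U x1 t"] U_range[of x1 t] t v s x12 y b l_bounds by auto
    also have "\<dots> = U x2 t"
      using U_assoc[of x1 s t] U_commute[of s t] U_commute[of s "U x1 t"] U_assoc[of x1 t s]
        U_range[of x1 t] s t x12 y b e_less_1 by auto
    finally show False using U_x2_less_l[OF t(1,2)] v by auto
  qed
qed

lemma two_discontinuities_contradiction: False
proof -
  have "x2 \<in> U x1 ` {e..1}" by (rule subsetD[OF section_onto_upper]) (use l_bounds x12 in auto)
  then obtain s where s: "e \<le> s" "s \<le> 1" "U x1 s = x2" by auto
  have "x1 \<in> U l ` {e..1}" by (rule subsetD[OF section_onto_upper]) (use l_bounds x12 in auto)
  then obtain r where r: "e \<le> r" "r \<le> 1" "U l r = x1" by auto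
  have "x2 = U (U l r) s" using s r by simp
  also have "\<dots> = U (U l s) r"
    using U_assoc[of l r s] U_commute[of r s] U_assoc[of l s r] r s l_bounds x12 e_pos by auto
  also have "\<dots> = x1" using U_fixes_l[OF s] U_commute[of l s] r s l_bounds x12 e_pos by auto
  finally show False using x12 by simp
qed

end

lemma idempotent_of_two_discontinuities_below_e:
  assumes x12: "0 \<le> x1" "x1 < x2" "x2 \<le> 1" and y: "0 \<le> y" "y < e"
    and "\<not> continuous (at y within {0..1}) (U x1)" "\<not> continuous (at y within {0..1}) (U x2)"
  shows "U y y = y"
proof (rule ccontr)
  assume "U y y \<noteq> y"
  then have "U y y < y" using U_le_left[of y y] y e_less_1 by auto
  then obtain b where "y < b" "b \<le> e" "U b b = b" "\<And>t. 0 \<le> t \<Longrightarrow> t < b \<Longrightarrow> U y t < y"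
    using least_section_solution y by blast
  then show False using two_discontinuities_contradiction[OF x12, of y b] assms by auto
qed

lemma dual_sectionally_continuous: "sectionally_continuous_uninorm (\<lambda>a b. 1 - U (1 - a) (1 - b)) (1 - e)"
proof unfold_locales
  show "uninorm (\<lambda>a b. 1 - U (1 - a) (1 - b)) (1 - e)"
    unfolding uninorm_def
  proof (intro conjI ballI impI)
    fix x y :: real assume "x \<in> {0..1}" "y \<in> {0..1}"
    then show "1 - U (1 - x) (1 - y) \<in> {0..1}" "1 - U (1 - x) (1 - y) = 1 - U (1 - y) (1 - x)"
      using U_range[of "1 - x" "1 - y"] U_commute[of "1 - x" "1 - y"] by auto
  next
    fix x y z :: real assume "x \<in> {0..1}" "y \<in> {0..1}" "z \<in> {0..1}"
    then show "1 - U (1 - (1 - U (1 - x) (1 - y))) (1 - z)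
        = 1 - U (1 - x) (1 - (1 - U (1 - y) (1 - z)))"
      using U_assoc[of "1 - x" "1 - y" "1 - z"] by auto
  next
    fix x y z :: real assume "x \<in> {0..1}" "y \<in> {0..1}" "z \<in> {0..1}" "y \<le> z"
    then show "1 - U (1 - x) (1 - y) \<le> 1 - U (1 - x) (1 - z)"
      using U_mono_right[of "1 - x" "1 - z" "1 - y"] by auto
  next
    fix x :: real assume "x \<in> {0..1}"
    then show "1 - U (1 - (1 - e)) (1 - x) = x" using U_neutral_left[of "1 - x"] by auto
  qed (use e_pos e_less_1 in auto)
  show "0 < 1 - e" "1 - e < 1" using e_pos e_less_1 by auto
next
  fix a assume "a \<in> {0..1 - e}"
  then have "continuous_on {0..1 - e} (U (1 - a) \<circ> (\<lambda>b. 1 - b))"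
    by (intro continuous_on_compose continuous_intros continuous_on_subset[OF continuous_upper])
      (auto simp: image_iff)
  then show "continuous_on {0..1 - e} (\<lambda>b. 1 - U (1 - a) (1 - b))"
    by (auto simp: o_def intro: continuous_intros)
next
  fix a assume "a \<in> {1 - e..1}"
  then have "continuous_on {1 - e..1} (U (1 - a) \<circ> (\<lambda>b. 1 - b))"
    by (intro continuous_on_compose continuous_intros continuous_on_subset[OF continuous_lower])
      (auto simp: image_iff)
  then show "continuous_on {1 - e..1} (\<lambda>b. 1 - U (1 - a) (1 - b))"
    by (auto simp: o_def intro: continuous_intros)
qed

lemma idempotent_of_two_discontinuities:
  assumes "0 \<le> x1" "x1 < x2" "x2 \<le> 1" "0 \<le> y" "y \<le> 1"
    and "\<not> continuous (at y within {0..1}) (U x1)" "\<not> continuous (at y within {0..1}) (U x2)"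
  shows "U y y = y"
proof -
  consider "y < e" | "y = e" | "e < y" by linarith
  then show ?thesis
  proof cases
    case 1
    then show ?thesis using idempotent_of_two_discontinuities_below_e assms by blast
  next
    case 2
    then show ?thesis using U_neutral_left e_pos e_less_1 by simp
  next
    case 3
    interpret dual: sectionally_continuous_uninorm "\<lambda>a b. 1 - U (1 - a) (1 - b)" "1 - e"
      by (rule dual_sectionally_continuous)
    have "\<not> continuous (at (1 - y) within {0..1}) (\<lambda>z. 1 - U x (1 - z))"
      if "\<not> continuous (at y within {0..1}) (U x)" for x
      using continuous_within_reflect that by blast
    then have "1 - U (1 - (1 - y)) (1 - (1 - y)) = 1 - y"
      using dual.idempotent_of_two_discontinuities_below_e[of "1 - x2" "1 - x1" "1 - y"] assms 3
      by auto
    then show ?thesis by simp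
  qed
qed

end

lemma in_class_U_continuous_lower:
  assumes "0 < e" "in_class_U U e" "a \<in> {0..e}"
  shows "continuous_on {0..e} (U a)"
proof -
  have T: "continuous_on ({0..1} \<times> {0..1}) (\<lambda>p. underlying_tnorm U e (fst p) (snd p))"
    using assms(2) unfolding in_class_U_def by blast
  have c: "continuous_on {0..e} (\<lambda>t. (a / e, t / e))"
    using assms(1) by (intro continuous_intros) auto
  have im: "(\<lambda>t. (a / e, t / e)) ` {0..e} \<subseteq> {0..1} \<times> {0..1}"
    using assms(1,3) by auto
  have "continuous_on {0..e} (\<lambda>t. underlying_tnorm U e (a / e) (t / e))"
    using continuous_on_compose2[OF T c im] by simp
  then have "continuous_on {0..e} (\<lambda>t. e * underlying_tnorm U e (a / e) (t / e))"
    by (intro continuous_intros)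
  then show ?thesis
    by (rule continuous_on_eq) (use assms(1) in \<open>simp add: underlying_tnorm_def\<close>)
qed

lemma in_class_U_continuous_upper:
  assumes "e < 1" "in_class_U U e" "a \<in> {e..1}"
  shows "continuous_on {e..1} (U a)"
proof -
  have T: "continuous_on ({0..1} \<times> {0..1}) (\<lambda>p. underlying_tconorm U e (fst p) (snd p))"
    using assms(2) unfolding in_class_U_def by blast
  have c: "continuous_on {e..1} (\<lambda>t. ((a - e) / (1 - e), (t - e) / (1 - e)))"
    using assms(1) by (intro continuous_intros) auto
  have im: "(\<lambda>t. ((a - e) / (1 - e), (t - e) / (1 - e))) ` {e..1} \<subseteq> {0..1} \<times> {0..1}"
    using assms(1,3) by (auto simp: field_simps)
  have "continuous_on {e..1} (\<lambda>t. underlying_tconorm U e ((a - e) / (1 - e)) ((t - e) / (1 - e)))"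
    using continuous_on_compose2[OF T c im] by simp
  then have "continuous_on {e..1}
      (\<lambda>t. e + (1 - e) * underlying_tconorm U e ((a - e) / (1 - e)) ((t - e) / (1 - e)))"
    by (intro continuous_intros)
  then show ?thesis
    by (rule continuous_on_eq) (use assms(1) in \<open>simp add: underlying_tconorm_def\<close>)
qed

lemma sectionally_continuous_if_in_class_U:
  assumes "uninorm U e" "0 < e" "e < 1" "in_class_U U e"
  shows "sectionally_continuous_uninorm U e"
  using assms in_class_U_continuous_lower in_class_U_continuous_upper
  by unfold_locales auto

theorem proposition17:
  fixes U :: "real \<Rightarrow> real \<Rightarrow> real" and e x1 x2 y :: real
  assumes "uninorm U e" and "0 < e" and "e < 1"
    and "in_class_U U e"
    and "x1 \<in> {0..1}" and "x2 \<in> {0..1}" and "x1 < x2" and "y \<in> {0..1}"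
    and "\<not> continuous (at y within {0..1}) (U x1)"
    and "\<not> continuous (at y within {0..1}) (U x2)"
  shows "idempotent_elem U y"
proof -
  interpret sectionally_continuous_uninorm U e
    using sectionally_continuous_if_in_class_U assms(1-4) by blast
  show ?thesis
    unfolding idempotent_elem_def using idempotent_of_two_discontinuities assms(5-10) by auto
qed

end
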